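(* Let $\mathbb D\subset\mathbb C$ be a contractible open subset containing $0$. Let $\nu=\nu(z,w)$ and $s=s(z,w)$ be holomorphic functions on $\mathbb D\times\mathbb D$ satisfying $\nu_{zz}+\tfrac s2\nu=0$, with $\nu(0,0)=0$ and $\nu\not\equiv0$. Then the limit of $\mu=-\frac{2\nu_z}{\nu}$ as $(z,w)\to(0,0)$ exists, i.e. it is either a finite number or $\infty$. *)

theory Defs
  imports "HOL-Analysis.Analysis"
begin

definition holomorphic2_on :: "(complex \<times> complex \<Rightarrow> complex) \<Rightarrow> (complex \<times> complex) set \<Rightarrow> bool" where
  "holomorphic2_on f S \<longleftrightarrow>
     (\<forall>p\<in>S. \<exists>a b. (f has_derivative (\<lambda>(h, k). a * h + b * k)) (at p))"

definition dz :: "(complex \<times> complex \<Rightarrow> complex) \<Rightarrow> complex \<times> complex \<Rightarrow> complex" where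
  "dz f p = deriv (\<lambda>z. f (z, snd p)) (fst p)"

end

theory Submission
  imports Defs "HOL-Complex_Analysis.Complex_Analysis"
begin

text \<open>For fixed \<open>w\<close>, \<open>\<nu>(\<cdot>, w)\<close> solves the linear equation \<open>\<nu>'' = -(s/2) \<nu>\<close>. Bootstrapping
  Taylor's estimate through this equation gives, uniformly near the origin,
  \<open>\<nu> = A(w) + B(w) z + O((|A(w)| + |B(w)|) |z|\<^sup>2)\<close> and \<open>\<nu>\<^sub>z = B(w) + O((|A(w)| + |B(w)|) |z|)\<close>,
  where \<open>A(w) = \<nu>(0, w)\<close> and \<open>B(w) = \<nu>\<^sub>z(0, w)\<close> are holomorphic and \<open>A(0) = 0\<close>.
  Since \<open>A/B\<close> has no essential singularity at \<open>0\<close>, near \<open>w = 0\<close> either \<open>A\<close> and \<open>B\<close> both vanish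
  (and then so does \<open>\<nu>\<close>), or \<open>A/B \<rightarrow> 0\<close>, or \<open>B/A \<rightarrow> L\<close>. Dividing numerator and denominator of
  \<open>\<nu>\<^sub>z/\<nu>\<close> by the dominant coefficient shows that \<open>\<mu> = -2\<nu>\<^sub>z/\<nu>\<close> tends to \<open>\<infinity>\<close> in the second case
  and to \<open>-2L\<close> in the third.\<close>

lemma holomorphic2_onD:
  assumes "holomorphic2_on f S" "p \<in> S"
  obtains a b where "(f has_derivative (\<lambda>(h, k). a * h + b * k)) (at p)"
  using assms unfolding holomorphic2_on_def by blast

lemma holomorphic2_on_imp_continuous_on:
  assumes "holomorphic2_on f S"
  shows "continuous_on S f"
  by (meson assms continuous_at_imp_continuous_on has_derivative_continuous holomorphic2_onD)

lemma holomorphic2_on_holomorphic_on_fst: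
  assumes "holomorphic2_on f (S \<times> T)" "w \<in> T"
  shows "(\<lambda>z. f (z, w)) holomorphic_on S"
proof (rule holomorphic_onI)
  fix z assume "z \<in> S"
  then obtain a b where f': "(f has_derivative (\<lambda>(h, k). a * h + b * k)) (at (z, w))"
    using holomorphic2_onD assms by blast
  have "((\<lambda>z. (z, w)) has_derivative (\<lambda>h. (h, 0))) (at z)"
    by (auto intro!: derivative_eq_intros)
  from diff_chain_at[OF this f'] have "((\<lambda>z. f (z, w)) has_field_derivative a) (at z)"
    by (simp add: o_def has_field_derivative_def)
  then show "(\<lambda>z. f (z, w)) field_differentiable at z within S"
    using field_differentiable_at_within field_differentiable_def by blast
qed

lemma holomorphic2_on_holomorphic_on_snd:
  assumes "holomorphic2_on f (S \<times> T)" "z \<in> S"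
  shows "(\<lambda>w. f (z, w)) holomorphic_on T"
proof (rule holomorphic_onI)
  fix w assume "w \<in> T"
  then obtain a b where f': "(f has_derivative (\<lambda>(h, k). a * h + b * k)) (at (z, w))"
    using holomorphic2_onD assms by blast
  have "((\<lambda>w. (z, w)) has_derivative (\<lambda>k. (0, k))) (at w)"
    by (auto intro!: derivative_eq_intros)
  from diff_chain_at[OF this f'] have "((\<lambda>w. f (z, w)) has_field_derivative b) (at w)"
    by (simp add: o_def has_field_derivative_def)
  then show "(\<lambda>w. f (z, w)) field_differentiable at w within T"
    using field_differentiable_at_within field_differentiable_def by blast
qed

lemma taylor_estimates_of_deriv2_bound:
  fixes f :: "complex \<Rightarrow> complex"
  assumes hol: "f holomorphic_on U" "open U" "cball 0 \<rho> \<subseteq> U"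
    and deriv2: "\<And>x. x \<in> cball 0 \<rho> \<Longrightarrow> norm (deriv (deriv f) x) \<le> C"
    and z: "z \<in> cball 0 \<rho>"
  shows "norm (f z - (f 0 + deriv f 0 * z)) \<le> C * norm z ^ 2"
    and "norm (deriv f z - deriv f 0) \<le> C * norm z"
proof -
  have d: "((deriv ^^ i) f has_field_derivative (deriv ^^ Suc i) f x) (at x within cball 0 \<rho>)"
    if "x \<in> cball 0 \<rho>" for i x
  proof -
    have "(deriv ^^ i) f holomorphic_on U"
      using hol by (intro holomorphic_higher_deriv) auto
    then show ?thesis
      using holomorphic_derivI[of "(deriv ^^ i) f" U x] hol that by auto
  qed
  have 0: "0 \<in> cball (0::complex) \<rho>"
    using z by simp (meson norm_ge_zero order_trans)
  have "norm (f z - (\<Sum>i\<le>1. (deriv ^^ i) f 0 * (z - 0) ^ i / fact i)) \<le> C * norm (z - 0) ^ 2 / fact 1"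
    using complex_Taylor[of "cball 0 \<rho>" 1 "\<lambda>i. (deriv ^^ i) f" C 0 z] d deriv2 z 0
    by (simp add: numeral_2_eq_2)
  then show "norm (f z - (f 0 + deriv f 0 * z)) \<le> C * norm z ^ 2"
    by (simp add: add.commute)
  have "norm (deriv f z - (\<Sum>i\<le>0. (deriv ^^ Suc i) f 0 * (z - 0) ^ i / fact i)) \<le> C * norm (z - 0) ^ 1 / fact 0"
    using complex_Taylor[of "cball 0 \<rho>" 0 "\<lambda>i. (deriv ^^ Suc i) f" C 0 z] d[of _ 1] deriv2 z 0
    by simp
  then show "norm (deriv f z - deriv f 0) \<le> C * norm z"
    by simp
qed

lemma taylor_estimates_of_deriv2_le_mult:
  fixes f :: "complex \<Rightarrow> complex"
  assumes hol: "f holomorphic_on U" "open U" "cball 0 \<rho> \<subseteq> U"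
    and deriv2: "\<And>x. x \<in> cball 0 \<rho> \<Longrightarrow> norm (deriv (deriv f) x) \<le> M * norm (f x)"
    and M: "0 \<le> M" "\<rho> \<le> 1" "M * \<rho> \<le> 1/2"
    and z: "z \<in> cball 0 \<rho>"
  shows "norm (f z - (f 0 + deriv f 0 * z)) \<le> 2 * M * (norm (f 0) + norm (deriv f 0)) * norm z ^ 2"
    and "norm (deriv f z - deriv f 0) \<le> 2 * M * (norm (f 0) + norm (deriv f 0)) * norm z"
proof -
  define N where "N = norm (f 0) + norm (deriv f 0)"
  have "continuous_on (cball 0 \<rho>) (\<lambda>x. norm (f x))"
    using hol by (intro continuous_intros holomorphic_on_imp_continuous_on) auto
  then obtain y where y: "y \<in> cball 0 \<rho>" and y_max: "\<And>x. x \<in> cball 0 \<rho> \<Longrightarrow> norm (f x) \<le> norm (f y)"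
    using continuous_attains_sup[OF compact_cball] z by blast
  define S where "S = norm (f y)"
  have deriv2_S: "norm (deriv (deriv f) x) \<le> M * S" if "x \<in> cball 0 \<rho>" for x
    using deriv2[OF that] mult_left_mono[OF y_max[OF that] M(1)] unfolding S_def by linarith
  \<comment> \<open>Bootstrap: the maximum \<open>S\<close> of \<open>|f|\<close> on the disc satisfies \<open>S \<le> N + M S \<rho>\<^sup>2 \<le> N + S/2\<close>.\<close>
  have "S \<le> 2 * N"
  proof -
    have y1: "norm y \<le> 1" "norm y \<le> \<rho>"
      using y M(2) by auto
    have "norm y ^ 2 \<le> \<rho>"
      using mult_left_le[of "norm y" "norm y"] y1 by (simp add: power2_eq_square)
    then have "M * norm y ^ 2 \<le> M * \<rho>"
      using M(1) by (rule mult_left_mono)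
    then have "M * S * norm y ^ 2 \<le> S / 2"
      using mult_left_mono[of "M * norm y ^ 2" "1/2" S] M(3) by (simp add: S_def algebra_simps)
    moreover have "norm (f y - (f 0 + deriv f 0 * y)) \<le> M * S * norm y ^ 2"
      by (rule taylor_estimates_of_deriv2_bound(1)[OF hol deriv2_S y])
    moreover have "norm (f 0 + deriv f 0 * y) \<le> N"
      using y1 norm_triangle_ineq[of "f 0" "deriv f 0 * y"]
        mult_left_le[of "norm y" "norm (deriv f 0)"]
      by (simp add: N_def norm_mult)
    ultimately show ?thesis
      using norm_triangle_sub[of "f y" "f 0 + deriv f 0 * y"] unfolding S_def by linarith
  qed
  then have deriv2_N: "norm (deriv (deriv f) x) \<le> 2 * M * N" if "x \<in> cball 0 \<rho>" for x
    using deriv2_S[OF that] mult_left_mono[of S "2 * N" M] M(1) by simp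
  show "norm (f z - (f 0 + deriv f 0 * z)) \<le> 2 * M * (norm (f 0) + norm (deriv f 0)) * norm z ^ 2"
    and "norm (deriv f z - deriv f 0) \<le> 2 * M * (norm (f 0) + norm (deriv f 0)) * norm z"
    using taylor_estimates_of_deriv2_bound[OF hol deriv2_N z] unfolding N_def by simp_all
qed

lemma holomorphic_on_deriv_parametric:
  fixes f :: "complex \<times> complex \<Rightarrow> complex"
  assumes U: "open U" "cball 0 \<rho> \<subseteq> U" and \<rho>: "0 < \<rho>"
    and hol_fst: "\<And>w. w \<in> cball 0 \<rho> \<Longrightarrow> (\<lambda>z. f (z, w)) holomorphic_on U"
    and hol_snd: "\<And>z. z \<in> cball 0 \<rho> \<Longrightarrow> (\<lambda>w. f (z, w)) holomorphic_on U"
    and deriv2: "\<And>z w. z \<in> cball 0 \<rho> \<Longrightarrow> w \<in> cball 0 \<rho> \<Longrightarrow> norm (deriv (deriv (\<lambda>z. f (z, w))) z) \<le> C"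
  shows "(\<lambda>w. deriv (\<lambda>z. f (z, w)) 0) holomorphic_on ball 0 \<rho>"
proof -
  \<comment> \<open>The difference quotients at \<open>h n = \<rho> / (n + 1)\<close> converge uniformly in \<open>w\<close>, by the Taylor estimate.\<close>
  define h where "h n = complex_of_real (\<rho> / real (Suc n))" for n
  define q where "q n w = (f (h n, w) - f (0, w)) / h n" for n w
  define G where "G w = deriv (\<lambda>z. f (z, w)) 0" for w
  have norm_h: "norm (h n) = \<rho> / real (Suc n)" for n
    unfolding h_def norm_of_real using \<rho> by simp
  have h: "h n \<noteq> 0" "h n \<in> cball 0 \<rho>" for n
    using \<rho> norm_h[of n] by (auto simp: field_simps)
  have "continuous_on (cball 0 \<rho>) (\<lambda>w. f (z, w)) \<and> (\<lambda>w. f (z, w)) holomorphic_on ball 0 \<rho>"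
    if "z \<in> cball 0 \<rho>" for z
    using hol_snd[OF that] U by (meson ball_subset_cball holomorphic_on_imp_continuous_on
        holomorphic_on_subset continuous_on_subset order_trans)
  then have q: "\<forall>\<^sub>F n in sequentially. continuous_on (cball 0 \<rho>) (q n) \<and> q n holomorphic_on ball 0 \<rho>"
    using h \<rho> unfolding q_def by (intro always_eventually allI conjI continuous_intros holomorphic_intros) auto
  have "uniform_limit (cball 0 \<rho>) q G sequentially"
  proof (rule uniform_limitI)
    fix e :: real assume "0 < e"
    have "(\<lambda>n. C * \<rho> * inverse (real (Suc n))) \<longlonglongrightarrow> 0"
      by (intro tendsto_mult_right_zero LIMSEQ_inverse_real_of_nat)
    then have "\<forall>\<^sub>F n in sequentially. C * \<rho> * inverse (real (Suc n)) < e"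
      using \<open>0 < e\<close> by (rule order_tendstoD)
    then show "\<forall>\<^sub>F n in sequentially. \<forall>w\<in>cball 0 \<rho>. dist (q n w) (G w) < e"
    proof (rule eventually_mono, intro ballI)
      fix n :: nat and w :: complex assume lt: "C * \<rho> * inverse (real (Suc n)) < e" and w: "w \<in> cball 0 \<rho>"
      have "dist (q n w) (G w) = norm (f (h n, w) - (f (0, w) + G w * h n)) / norm (h n)"
        using h(1) by (simp add: q_def dist_norm norm_divide[symmetric] field_simps)
      also have "\<dots> \<le> C * norm (h n) ^ 2 / norm (h n)"
        using taylor_estimates_of_deriv2_bound(1)[OF hol_fst[OF w] U deriv2[OF _ w] h(2)]
        by (simp add: G_def divide_right_mono)
      also have "\<dots> = C * norm (h n)"
        using h(1) by (simp add: power2_eq_square)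
      also have "\<dots> = C * \<rho> * inverse (real (Suc n))"
        by (simp add: norm_h divide_inverse)
      finally show "dist (q n w) (G w) < e"
        using lt by linarith
    qed
  qed
  from holomorphic_uniform_limit[OF q this trivial_limit_sequentially]
  show ?thesis unfolding G_def by blast
qed

lemma ode_deriv2_local_bounds:
  fixes \<nu> q :: "complex \<times> complex \<Rightarrow> complex"
  assumes D: "open D" "0 \<in> D" and \<nu>: "continuous_on (D \<times> D) \<nu>" and q: "continuous_on (D \<times> D) q"
    and ode: "\<And>p. p \<in> D \<times> D \<Longrightarrow> dz (dz \<nu>) p = q p * \<nu> p"
  obtains \<rho> M C where "0 < \<rho>" "\<rho> \<le> 1" "0 \<le> M" "M * \<rho> \<le> 1/2" "cball 0 \<rho> \<subseteq> D"
    and "\<And>z w. z \<in> cball 0 \<rho> \<Longrightarrow> w \<in> cball 0 \<rho> \<Longrightarrow>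
      norm (deriv (deriv (\<lambda>z. \<nu> (z, w))) z) \<le> M * norm (\<nu> (z, w))"
    and "\<And>z w. z \<in> cball 0 \<rho> \<Longrightarrow> w \<in> cball 0 \<rho> \<Longrightarrow> norm (\<nu> (z, w)) \<le> C"
proof -
  obtain r where r: "0 < r" "cball 0 r \<subseteq> D"
    using open_contains_cball D by blast
  define K where "K = cball (0::complex) r \<times> cball (0::complex) r"
  have K: "compact K" "K \<subseteq> D \<times> D"
    using r by (auto simp: K_def intro: compact_Times)
  have "bounded (q ` K)" "bounded (\<nu> ` K)"
    using K \<nu> q by (meson compact_continuous_image compact_imp_bounded continuous_on_subset)+
  then have "\<exists>M>0. \<forall>p\<in>K. norm (q p) \<le> M" "\<exists>C>0. \<forall>p\<in>K. norm (\<nu> p) \<le> C"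
    by (simp_all add: bounded_pos)
  then obtain M C where M: "0 < M" "\<And>p. p \<in> K \<Longrightarrow> norm (q p) \<le> M"
    and C: "\<And>p. p \<in> K \<Longrightarrow> norm (\<nu> p) \<le> C"
    by blast
  define \<rho> where "\<rho> = min r (min 1 (1 / (2 * M)))"
  have "0 < \<rho>" "\<rho> \<le> 1" "\<rho> \<le> 1 / (2 * M)"
    using r M by (auto simp: \<rho>_def)
  then have \<rho>: "0 < \<rho>" "\<rho> \<le> 1" "M * \<rho> \<le> 1/2"
    using M(1) mult_left_mono[of \<rho> "1 / (2 * M)" M] by auto
  have sub: "cball 0 \<rho> \<subseteq> D" and in_K: "\<And>z w. z \<in> cball 0 \<rho> \<Longrightarrow> w \<in> cball 0 \<rho> \<Longrightarrow> (z, w) \<in> K"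
    using r by (auto simp: K_def \<rho>_def)
  have deriv2: "norm (deriv (deriv (\<lambda>z. \<nu> (z, w))) z) \<le> M * norm (\<nu> (z, w))"
    if "z \<in> cball 0 \<rho>" "w \<in> cball 0 \<rho>" for z w
  proof -
    have "(z, w) \<in> D \<times> D"
      using that sub by auto
    from ode[OF this] have "deriv (deriv (\<lambda>z. \<nu> (z, w))) z = q (z, w) * \<nu> (z, w)"
      by (simp add: dz_def)
    then show ?thesis
      using M(2)[OF in_K[OF that]] by (simp add: norm_mult mult_right_mono)
  qed
  show thesis
    using that[OF \<rho>(1,2) _ \<rho>(3) sub deriv2 C[OF in_K]] M(1) by simp
qed

lemma holomorphic2_ode_expansion:
  fixes \<nu> q :: "complex \<times> complex \<Rightarrow> complex"
  assumes D: "open D" "0 \<in> D" and \<nu>: "holomorphic2_on \<nu> (D \<times> D)" and q: "continuous_on (D \<times> D) q"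
    and ode: "\<And>p. p \<in> D \<times> D \<Longrightarrow> dz (dz \<nu>) p = q p * \<nu> p"
  obtains \<rho> c where "0 < \<rho>"
    and "(\<lambda>w. \<nu> (0, w)) holomorphic_on ball 0 \<rho>" "(\<lambda>w. dz \<nu> (0, w)) holomorphic_on ball 0 \<rho>"
    and "\<forall>\<^sub>F p in nhds (0, 0). norm (\<nu> p - (\<nu> (0, snd p) + dz \<nu> (0, snd p) * fst p))
           \<le> c * (norm (\<nu> (0, snd p)) + norm (dz \<nu> (0, snd p))) * norm (fst p) ^ 2"
    and "\<forall>\<^sub>F p in nhds (0, 0). norm (dz \<nu> p - dz \<nu> (0, snd p))
           \<le> c * (norm (\<nu> (0, snd p)) + norm (dz \<nu> (0, snd p))) * norm (fst p)"
proof -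
  obtain \<rho> M C where \<rho>: "0 < \<rho>" "\<rho> \<le> 1" "0 \<le> M" "M * \<rho> \<le> 1/2" and sub: "cball 0 \<rho> \<subseteq> D"
    and deriv2: "\<And>z w. z \<in> cball 0 \<rho> \<Longrightarrow> w \<in> cball 0 \<rho> \<Longrightarrow>
      norm (deriv (deriv (\<lambda>z. \<nu> (z, w))) z) \<le> M * norm (\<nu> (z, w))"
    and bound: "\<And>z w. z \<in> cball 0 \<rho> \<Longrightarrow> w \<in> cball 0 \<rho> \<Longrightarrow> norm (\<nu> (z, w)) \<le> C"
    using ode_deriv2_local_bounds[OF D holomorphic2_on_imp_continuous_on[OF \<nu>] q ode] by blast
  have hol_fst: "(\<lambda>z. \<nu> (z, w)) holomorphic_on D" and hol_snd: "(\<lambda>z. \<nu> (w, z)) holomorphic_on D"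
    if "w \<in> cball 0 \<rho>" for w
    using that sub holomorphic2_on_holomorphic_on_fst[OF \<nu>] holomorphic2_on_holomorphic_on_snd[OF \<nu>] by auto
  have dz_eq: "dz \<nu> (z, w) = deriv (\<lambda>z. \<nu> (z, w)) z" for z w
    by (simp add: dz_def)
  have "\<forall>\<^sub>F p in nhds (0, 0). p \<in> ball 0 \<rho> \<times> ball 0 \<rho>"
    using \<rho>(1) by (intro eventually_nhds_in_open open_Times) auto
  then have near: "\<forall>\<^sub>F p in nhds (0, 0). fst p \<in> cball 0 \<rho> \<and> snd p \<in> cball 0 \<rho>"
    by eventually_elim (auto simp: mem_Times_iff)
  show thesis
  proof (rule that[of \<rho> "2 * M"])
    show "(\<lambda>w. \<nu> (0, w)) holomorphic_on ball 0 \<rho>"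
      using hol_snd[of 0] sub \<rho>(1) by (meson ball_subset_cball centre_in_cball holomorphic_on_subset
          less_imp_le order_trans)
    have deriv2_bound: "norm (deriv (deriv (\<lambda>z. \<nu> (z, w))) z) \<le> M * C"
      if "z \<in> cball 0 \<rho>" "w \<in> cball 0 \<rho>" for z w
      using deriv2[OF that] bound[OF that] \<rho>(3) by (meson mult_left_mono order_trans)
    have "(\<lambda>w. deriv (\<lambda>z. \<nu> (z, w)) 0) holomorphic_on ball 0 \<rho>"
      by (rule holomorphic_on_deriv_parametric[OF D(1) sub \<rho>(1) hol_fst hol_snd deriv2_bound])
    then show "(\<lambda>w. dz \<nu> (0, w)) holomorphic_on ball 0 \<rho>"
      by (simp add: dz_eq)
    note estimates = taylor_estimates_of_deriv2_le_mult[OF hol_fst D(1) sub deriv2 \<rho>(3,2,4)]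
    show "\<forall>\<^sub>F p in nhds (0, 0). norm (\<nu> p - (\<nu> (0, snd p) + dz \<nu> (0, snd p) * fst p))
           \<le> 2 * M * (norm (\<nu> (0, snd p)) + norm (dz \<nu> (0, snd p))) * norm (fst p) ^ 2"
      using near by eventually_elim (use estimates(1) in \<open>auto simp: dz_eq\<close>)
    show "\<forall>\<^sub>F p in nhds (0, 0). norm (dz \<nu> p - dz \<nu> (0, snd p))
           \<le> 2 * M * (norm (\<nu> (0, snd p)) + norm (dz \<nu> (0, snd p))) * norm (fst p)"
      using near by eventually_elim (use estimates(2) in \<open>auto simp: dz_eq\<close>)
  qed (fact \<rho>(1))
qed

lemma holomorphic_eventually_zero_or_nonzero:
  assumes "h holomorphic_on U" "open U" "x \<in> U"
  shows "(\<forall>\<^sub>F w in at x. h w = 0) \<or> (\<forall>\<^sub>F w in at x. h w \<noteq> 0)"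
proof -
  have "isolated_singularity_at h x" "not_essential h x"
    using assms isolated_singularity_at_holomorphic[of h U x] not_essential_holomorphic[of h U x]
      holomorphic_on_subset by auto
  then show ?thesis
    using non_zero_neighbour by (metis not_eventually)
qed

lemma not_essential_limit_cases:
  fixes \<phi> :: "complex \<Rightarrow> complex"
  assumes "not_essential \<phi> x"
  obtains (zero) "(\<phi> \<longlongrightarrow> 0) (at x)"
    | (inverse) L where "\<forall>\<^sub>F w in at x. \<phi> w \<noteq> 0" "((\<lambda>w. inverse (\<phi> w)) \<longlongrightarrow> L) (at x)"
proof -
  obtain l where "(\<phi> \<longlongrightarrow> l) (at x) \<or> is_pole \<phi> x"
    using assms unfolding not_essential_def by blast
  then consider "(\<phi> \<longlongrightarrow> 0) (at x)" | "(\<phi> \<longlongrightarrow> l) (at x)" "l \<noteq> 0" | "is_pole \<phi> x"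
    by blast
  then show thesis
  proof cases
    case 2
    have "\<forall>\<^sub>F w in at x. \<phi> w \<noteq> 0"
      using tendsto_imp_eventually_ne[OF 2] .
    moreover have "((\<lambda>w. inverse (\<phi> w)) \<longlongrightarrow> inverse l) (at x)"
      using tendsto_inverse[OF 2] .
    ultimately show thesis
      by (rule inverse)
  next
    case 3
    have "\<forall>\<^sub>F w in at x. \<phi> w \<noteq> 0"
      using non_zero_neighbour_pole[OF 3] .
    moreover have "((\<lambda>w. inverse (\<phi> w)) \<longlongrightarrow> 0) (at x)"
      using filterlim_inverse_at_iff[THEN iffD2, OF 3[unfolded is_pole_def]] by (simp add: filterlim_at)
    ultimately show thesis
      by (rule inverse)
  qed (rule zero)
qed

lemma holomorphic_quotient_limit_cases:
  fixes A B :: "complex \<Rightarrow> complex"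
  assumes hol: "A holomorphic_on U" "B holomorphic_on U" and U: "open U" "x \<in> U"
  obtains (vanishing) "\<forall>\<^sub>F w in at x. A w = 0 \<and> B w = 0"
    | (small) "\<forall>\<^sub>F w in at x. B w \<noteq> 0" "((\<lambda>w. A w / B w) \<longlongrightarrow> 0) (at x)"
    | (bounded) L where "\<forall>\<^sub>F w in at x. A w \<noteq> 0" "((\<lambda>w. B w / A w) \<longlongrightarrow> L) (at x)"
proof -
  consider "\<forall>\<^sub>F w in at x. B w = 0" | "\<forall>\<^sub>F w in at x. B w \<noteq> 0"
    using holomorphic_eventually_zero_or_nonzero[OF hol(2) U] by blast
  then show thesis
  proof cases
    case B_zero: 1
    have "((\<lambda>w. B w / A w) \<longlongrightarrow> 0) (at x)"
      by (rule tendsto_eventually) (use B_zero in \<open>auto elim: eventually_mono\<close>)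
    from holomorphic_eventually_zero_or_nonzero[OF hol(1) U] show thesis
    proof
      assume "\<forall>\<^sub>F w in at x. A w = 0"
      with B_zero show thesis
        by (intro vanishing) (simp add: eventually_conj)
    next
      assume "\<forall>\<^sub>F w in at x. A w \<noteq> 0"
      then show thesis
        using \<open>((\<lambda>w. B w / A w) \<longlongrightarrow> 0) (at x)\<close> by (rule bounded)
    qed
  next
    case B_ne: 2
    have "not_essential (\<lambda>w. A w / B w) x"
      using hol U by (intro not_essential_divide not_essential_holomorphic isolated_singularity_at_holomorphic)
        (auto intro: holomorphic_on_subset)
    then show thesis
    proof (cases rule: not_essential_limit_cases)
      case zero
      with B_ne show thesis by (rule small)
    next
      case (inverse L)
      have "\<forall>\<^sub>F w in at x. A w \<noteq> 0"
        using inverse(1) by (rule eventually_mono) auto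
      with inverse(2) show thesis
        by (intro bounded) auto
    qed
  qed
qed

lemma norm_divide_le_relative:
  fixes e a b d :: complex
  assumes "norm e \<le> c * (norm a + norm b) * t" "d \<noteq> 0"
  shows "norm (e / d) \<le> c * (norm (a / d) + norm (b / d)) * t"
proof -
  have "norm (e / d) = norm e / norm d" by (simp add: norm_divide)
  also have "\<dots> \<le> c * (norm a + norm b) * t / norm d"
    using assms by (simp add: divide_right_mono)
  also have "\<dots> = c * (norm (a / d) + norm (b / d)) * t"
    using assms(2) by (simp add: norm_divide field_simps)
  finally show ?thesis .
qed

lemma tendsto_relative_error_zero:
  fixes e a b d :: "'x \<Rightarrow> complex" and t :: "'x \<Rightarrow> real"
  assumes "\<forall>\<^sub>F p in F. norm (e p) \<le> c * (norm (a p) + norm (b p)) * t p"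
    and "\<forall>\<^sub>F p in F. d p \<noteq> 0"
    and "((\<lambda>p. a p / d p) \<longlongrightarrow> \<alpha>) F" "((\<lambda>p. b p / d p) \<longlongrightarrow> \<beta>) F" "(t \<longlongrightarrow> 0) F"
  shows "((\<lambda>p. e p / d p) \<longlongrightarrow> 0) F"
proof (rule Lim_null_comparison)
  show "\<forall>\<^sub>F p in F. norm (e p / d p) \<le> c * (norm (a p / d p) + norm (b p / d p)) * t p"
    using assms(1,2) by eventually_elim (rule norm_divide_le_relative)
  show "((\<lambda>p. c * (norm (a p / d p) + norm (b p / d p)) * t p) \<longlongrightarrow> 0) F"
    using tendsto_mult[OF tendsto_mult[OF tendsto_const[of c] tendsto_add[OF tendsto_norm tendsto_norm]] assms(5)]
      assms(3,4) by simp
qed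

lemma quotient_tendsto_of_expansion:
  fixes f g a b z :: "'x \<Rightarrow> complex"
  assumes z: "(z \<longlongrightarrow> 0) F"
    and f: "\<forall>\<^sub>F p in F. norm (f p - (a p + b p * z p)) \<le> c * (norm (a p) + norm (b p)) * norm (z p) ^ 2"
    and g: "\<forall>\<^sub>F p in F. norm (g p - b p) \<le> c * (norm (a p) + norm (b p)) * norm (z p)"
    and a: "\<forall>\<^sub>F p in F. a p \<noteq> 0" and L: "((\<lambda>p. b p / a p) \<longlongrightarrow> L) F"
  shows "((\<lambda>p. g p / f p) \<longlongrightarrow> L) F"
proof -
  have one: "((\<lambda>p. a p / a p) \<longlongrightarrow> 1) F"
    by (rule tendsto_eventually) (use a in \<open>auto elim: eventually_mono\<close>)
  have z2: "((\<lambda>p. norm (z p) ^ 2) \<longlongrightarrow> 0) F"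
    using tendsto_power[OF tendsto_norm_zero[OF z], of 2] by simp
  note tendsto_relative_error_zero[OF f a one L z2] tendsto_relative_error_zero[OF g a one L tendsto_norm_zero[OF z]]
  then   have "((\<lambda>p. (b p / a p + (g p - b p) / a p) / (1 + b p / a p * z p + (f p - (a p + b p * z p)) / a p))
      \<longlongrightarrow> (L + 0) / (1 + L * 0 + 0)) F"
    by (intro tendsto_intros L z) simp_all
  moreover have "\<forall>\<^sub>F p in F. (b p / a p + (g p - b p) / a p) / (1 + b p / a p * z p + (f p - (a p + b p * z p)) / a p)
      = g p / f p"
    using a by eventually_elim (simp add: field_simps)
  ultimately show ?thesis by (simp add: Lim_transform_eventually)
qed

lemma quotient_at_infinity_of_expansion:
  fixes f g a b z :: "'x \<Rightarrow> complex"
  assumes z: "(z \<longlongrightarrow> 0) F" and f_ne: "\<forall>\<^sub>F p in F. f p \<noteq> 0"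
    and f: "\<forall>\<^sub>F p in F. norm (f p - (a p + b p * z p)) \<le> c * (norm (a p) + norm (b p)) * norm (z p) ^ 2"
    and g: "\<forall>\<^sub>F p in F. norm (g p - b p) \<le> c * (norm (a p) + norm (b p)) * norm (z p)"
    and b: "\<forall>\<^sub>F p in F. b p \<noteq> 0" and a: "((\<lambda>p. a p / b p) \<longlongrightarrow> 0) F"
  shows "filterlim (\<lambda>p. g p / f p) at_infinity F"
proof -
  have one: "((\<lambda>p. b p / b p) \<longlongrightarrow> 1) F"
    by (rule tendsto_eventually) (use b in \<open>auto elim: eventually_mono\<close>)
  have z2: "((\<lambda>p. norm (z p) ^ 2) \<longlongrightarrow> 0) F"
    using tendsto_power[OF tendsto_norm_zero[OF z], of 2] by simp
  note tendsto_relative_error_zero[OF f b a one z2] tendsto_relative_error_zero[OF g b a one tendsto_norm_zero[OF z]]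
  then   have num: "((\<lambda>p. 1 + (g p - b p) / b p) \<longlongrightarrow> 1 + 0) F"
    and den: "((\<lambda>p. a p / b p + z p + (f p - (a p + b p * z p)) / b p) \<longlongrightarrow> 0 + 0 + 0) F"
    by (intro tendsto_intros a z; simp)+
  have eq: "\<forall>\<^sub>F p in F. 1 + (g p - b p) / b p = g p / b p \<and>
      a p / b p + z p + (f p - (a p + b p * z p)) / b p = f p / b p"
    using b by eventually_elim (simp add: field_simps)
  have "((\<lambda>p. f p / b p) \<longlongrightarrow> 0) F"
    by (rule Lim_transform_eventually[OF den[simplified]]) (use eq in \<open>auto elim: eventually_mono\<close>)
  moreover have "\<forall>\<^sub>F p in F. f p / b p \<noteq> 0"
    using f_ne b by eventually_elim simp
  ultimately have "filterlim (\<lambda>p. f p / b p) (at 0) F"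
    by (rule filterlim_atI)
  moreover have "((\<lambda>p. g p / b p) \<longlongrightarrow> 1) F"
    by (rule Lim_transform_eventually[OF num[simplified]]) (use eq in \<open>auto elim: eventually_mono\<close>)
  ultimately have "filterlim (\<lambda>p. (g p / b p) / (f p / b p)) at_infinity F"
    using filterlim_at_infinity_divide_iff by fastforce
  then show ?thesis
    by (rule filterlim_mono_eventually) (use b in \<open>auto elim: eventually_mono\<close>)
qed

lemma quotient_limit_of_holomorphic_expansion:
  fixes f g z w :: "'x \<Rightarrow> complex" and A B :: "complex \<Rightarrow> complex"
  assumes hol: "A holomorphic_on U" "B holomorphic_on U" "open U" "0 \<in> U" and A0: "A 0 = 0"
    and z: "(z \<longlongrightarrow> 0) F" and w: "(w \<longlongrightarrow> 0) F" and f_ne: "\<forall>\<^sub>F p in F. f p \<noteq> 0"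
    and f: "\<forall>\<^sub>F p in F. norm (f p - (A (w p) + B (w p) * z p))
              \<le> c * (norm (A (w p)) + norm (B (w p))) * norm (z p) ^ 2"
    and g: "\<forall>\<^sub>F p in F. norm (g p - B (w p)) \<le> c * (norm (A (w p)) + norm (B (w p))) * norm (z p)"
  shows "(\<exists>L. ((\<lambda>p. g p / f p) \<longlongrightarrow> L) F) \<or> filterlim (\<lambda>p. g p / f p) at_infinity F"
proof -
  note at_infinity = quotient_at_infinity_of_expansion[OF z f_ne f g]
  note finite = quotient_tendsto_of_expansion[OF z f g]
  have coeffs_ne: "\<forall>\<^sub>F p in F. A (w p) \<noteq> 0 \<or> B (w p) \<noteq> 0"
    using f f_ne by eventually_elim force
  have "isCont h 0" if "h holomorphic_on U" for h
    using that hol(3,4) by (meson continuous_on_eq_continuous_at holomorphic_on_imp_continuous_on)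
  then have A_lim: "((\<lambda>p. A (w p)) \<longlongrightarrow> 0) F" and B_lim: "((\<lambda>p. B (w p)) \<longlongrightarrow> B 0) F"
    using isCont_tendsto_compose[OF _ w] hol(1,2) A0 by fastforce+
  show ?thesis
  proof (cases "B 0 = 0")
    case False
    have "\<forall>\<^sub>F p in F. B (w p) \<noteq> 0"
      using tendsto_imp_eventually_ne[OF B_lim False] .
    moreover have "((\<lambda>p. A (w p) / B (w p)) \<longlongrightarrow> 0) F"
      using tendsto_divide[OF A_lim B_lim False] by simp
    ultimately show ?thesis using at_infinity by blast
  next
    case True
    \<comment> \<open>At \<open>w p = 0\<close> both coefficients vanish, so the expansion would force \<open>f p = 0\<close>.\<close>
    have "filterlim w (at 0) F"
      by (rule filterlim_atI[OF w]) (use coeffs_ne A0 True in \<open>auto elim: eventually_mono\<close>)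
    note transfer = eventually_compose_filterlim[OF _ this] filterlim_compose[OF _ this]
    from hol show ?thesis
    proof (cases rule: holomorphic_quotient_limit_cases)
      case vanishing
      have "\<forall>\<^sub>F p in F. False"
        using transfer(1)[OF vanishing] coeffs_ne by eventually_elim auto
      then show ?thesis by (simp add: eventually_False)
    next
      case small
      then show ?thesis using at_infinity transfer by blast
    next
      case (bounded L)
      then show ?thesis using finite transfer by blast
    qed
  qed
qed

lemma tendsto_or_at_infinity_mult_left:
  fixes h :: "'x \<Rightarrow> 'a::real_normed_field"
  assumes "(\<exists>L. (h \<longlongrightarrow> L) F) \<or> filterlim h at_infinity F" "\<kappa> \<noteq> 0"
  shows "(\<exists>L. ((\<lambda>p. \<kappa> * h p) \<longlongrightarrow> L) F) \<or> filterlim (\<lambda>p. \<kappa> * h p) at_infinity F"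
  using assms tendsto_mult_left tendsto_mult_filterlim_at_infinity[OF tendsto_const] by blast

theorem lemma2p12:
  fixes D :: "complex set"
    and \<nu> s :: "complex \<times> complex \<Rightarrow> complex"
  assumes "open D" and "contractible D" and "0 \<in> D"
    and "holomorphic2_on \<nu> (D \<times> D)"
    and "holomorphic2_on s (D \<times> D)"
    and "\<forall>p\<in>D \<times> D. dz (dz \<nu>) p + s p / 2 * \<nu> p = 0"
    and "\<nu> (0, 0) = 0"
    and "\<exists>p\<in>D \<times> D. \<nu> p \<noteq> 0"
  shows "(\<exists>L. ((\<lambda>p. - 2 * dz \<nu> p / \<nu> p) \<longlongrightarrow> L)
              (at (0, 0) within {p \<in> D \<times> D. \<nu> p \<noteq> 0}))
       \<or> filterlim (\<lambda>p. - 2 * dz \<nu> p / \<nu> p) at_infinity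
              (at (0, 0) within {p \<in> D \<times> D. \<nu> p \<noteq> 0})"
proof -
  have "continuous_on (D \<times> D) (\<lambda>p. - s p / 2)"
    using holomorphic2_on_imp_continuous_on[OF assms(5)] by (intro continuous_intros) auto
  moreover have "\<And>p. p \<in> D \<times> D \<Longrightarrow> dz (dz \<nu>) p = - s p / 2 * \<nu> p"
    using assms(6) by (auto simp: add_eq_0_iff2)
  ultimately obtain \<rho> c where "0 < \<rho>"
    and hol: "(\<lambda>w. \<nu> (0, w)) holomorphic_on ball 0 \<rho>" "(\<lambda>w. dz \<nu> (0, w)) holomorphic_on ball 0 \<rho>"
    and expansion:
      "\<forall>\<^sub>F p in nhds (0, 0). norm (\<nu> p - (\<nu> (0, snd p) + dz \<nu> (0, snd p) * fst p))
         \<le> c * (norm (\<nu> (0, snd p)) + norm (dz \<nu> (0, snd p))) * norm (fst p) ^ 2"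
      "\<forall>\<^sub>F p in nhds (0, 0). norm (dz \<nu> p - dz \<nu> (0, snd p))
         \<le> c * (norm (\<nu> (0, snd p)) + norm (dz \<nu> (0, snd p))) * norm (fst p)"
    by (rule holomorphic2_ode_expansion[OF assms(1,3,4)])
  define F where "F = at (0::complex, 0::complex) within {p \<in> D \<times> D. \<nu> p \<noteq> 0}"
  have "((\<lambda>p. p) \<longlongrightarrow> (0, 0)) F"
    unfolding F_def by (rule tendsto_ident_at)
  from tendsto_fst[OF this] tendsto_snd[OF this]
  have z: "(fst \<longlongrightarrow> 0) F" and w: "(snd \<longlongrightarrow> 0) F"
    by simp_all
  have "F \<le> nhds (0, 0)"
    unfolding F_def by (rule at_within_le_nhds)
  have "(\<exists>L. ((\<lambda>p. dz \<nu> p / \<nu> p) \<longlongrightarrow> L) F) \<or> filterlim (\<lambda>p. dz \<nu> p / \<nu> p) at_infinity F"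
  proof (rule quotient_limit_of_holomorphic_expansion[OF hol open_ball _ assms(7) z w])
    show "0 \<in> ball 0 \<rho>"
      using \<open>0 < \<rho>\<close> by simp
    show "\<forall>\<^sub>F p in F. \<nu> p \<noteq> 0"
      unfolding F_def by (auto simp: eventually_at_filter)
  qed (use filter_leD[OF \<open>F \<le> nhds (0, 0)\<close> expansion(1)] filter_leD[OF \<open>F \<le> nhds (0, 0)\<close> expansion(2)] in auto)
  from tendsto_or_at_infinity_mult_left[OF this, of "-2"]
  show ?thesis unfolding F_def by simp
qed

end
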